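(* Let $P$ be a polygon with vertex set $V$ and a non-empty dissection $D$, and let $d=\{\zeta,\eta\}\in D$ be such that $D = \{d\}\cup D_2$ where $D_2$ is a dissection of the subpolygon with vertex set $V_2 = \{\varepsilon \in V : \eta \le \varepsilon \le \zeta\}$. Let $U_1 = \{\varepsilon\in V : \zeta<\varepsilon<\eta\}$ and $U_2 = \{\varepsilon\in V : \eta<\varepsilon<\zeta\}$. If $\alpha \in U_1$, $\beta \in U_2$ and $\pi = (\pi_1,\dots,\pi_p) \in \mathcal{T}_{P,D}(\alpha,\beta)$, then $\pi_2 \in \{\zeta,\eta\}$.
   Context: A polygon is a finite set $V$ of at least three vertices with a cyclic order, pictured as a convex polygon in the plane with vertices anticlockwise. "$a\le\varepsilon\le b$" means $\varepsilon$ lies on the cyclic interval from $a$ to $b$ in the positive direction, endpoints included; "$<$" excludes the corresponding endpoint. A subpolygon is a subset of at least three vertices with induced cyclic order. A diagonal is a two-element subset of $V$ (edges included); non-edges are internal. Diagonals cross if they consist of four distinct vertices $\alpha,\beta,\gamma,\delta$ appearing cyclically as $\alpha,\gamma,\beta,\delta$ or $\alpha,\delta,\beta,\gamma$. A dissection is a set of pairwise non-crossing internal diagonals. For vertices $\pi_1\neq\pi_p$, a $T$-path from $\pi_1$ to $\pi_p$ w.r.t. $D$ is a tuple $(\pi_1,\dots,\pi_p)$ of vertices with: (i) $\{\pi_1,\pi_2\},\dots,\{\pi_{p-1},\pi_p\}$ pairwise different diagonals; (ii) no $\{\pi_i,\pi_{i+1}\}$ crosses a diagonal of $D$; (iii)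 each $\{\pi_{2j},\pi_{2j+1}\}$ lies in $D$, and these cross the segment $\{\pi_1,\pi_p\}$ at pairwise different points progressing monotonically from $\pi_1$ to $\pi_p$. $\mathcal{T}_{P,D}(\alpha,\beta)$ is the set of such paths from $\alpha$ to $\beta$. *)

theory Defs
  imports Main
begin

text \<open>Every finite cyclic order is induced by a linear order (cut it anywhere), so we take
  the vertices in a linearly ordered type and use the induced cyclic order.\<close>

definition polygon :: "'a::linorder set \<Rightarrow> bool" where
  "polygon V \<longleftrightarrow> finite V \<and> card V \<ge> 3"

definition cyc_le :: "'a::linorder \<Rightarrow> 'a \<Rightarrow> 'a \<Rightarrow> bool" where
  "cyc_le a e b \<longleftrightarrow> (if a \<le> b then a \<le> e \<and> e \<le> b else a \<le> e \<or> e \<le> b)"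

definition cyc_lt :: "'a::linorder \<Rightarrow> 'a \<Rightarrow> 'a \<Rightarrow> bool" where
  "cyc_lt a e b \<longleftrightarrow> cyc_le a e b \<and> e \<noteq> a \<and> e \<noteq> b"

definition diagonal :: "'a::linorder set \<Rightarrow> 'a set \<Rightarrow> bool" where
  "diagonal V d \<longleftrightarrow> d \<subseteq> V \<and> card d = 2"

definition is_edge :: "'a::linorder set \<Rightarrow> 'a set \<Rightarrow> bool" where
  "is_edge V d \<longleftrightarrow> diagonal V d \<and> (\<exists>a b. d = {a, b} \<and> \<not> (\<exists>v\<in>V. cyc_lt a v b))"

definition internal :: "'a::linorder set \<Rightarrow> 'a set \<Rightarrow> bool" where
  "internal V d \<longleftrightarrow> diagonal V d \<and> \<not> is_edge V d"

definition crosses :: "'a::linorder set \<Rightarrow> 'a set \<Rightarrow> bool" where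
  "crosses d1 d2 \<longleftrightarrow> (\<exists>a b c e. d1 = {a, b} \<and> d2 = {c, e} \<and> distinct [a, b, c, e]
      \<and> cyc_lt a c b \<and> cyc_lt b e a)"

definition dissection :: "'a::linorder set \<Rightarrow> 'a set set \<Rightarrow> bool" where
  "dissection V D \<longleftrightarrow> polygon V \<and> (\<forall>d\<in>D. internal V d)
      \<and> (\<forall>d1\<in>D. \<forall>d2\<in>D. \<not> crosses d1 d2)"

text \<open>For diagonals e, f (non-crossing, both crossing a segment starting at s),
  crosses_before s e f: the crossing point of e with the segment is strictly closer to s
  than that of f. Geometrically (convex position): s lies strictly on one side of e and
  f is a different diagonal contained in the closed other side of e.\<close>
definition crosses_before :: "'a::linorder \<Rightarrow> 'a set \<Rightarrow> 'a set \<Rightarrow> bool" where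
  "crosses_before s e f \<longleftrightarrow> (\<exists>x y. e = {x, y} \<and> cyc_lt x s y \<and> f \<noteq> e
      \<and> (\<forall>v\<in>f. cyc_le y v x))"

text \<open>T-paths, as lists; the paper's pi_k is the list entry at (0-based) index k-1,
  so the D-edges {pi_2j, pi_(2j+1)} are those starting at odd 0-based index.\<close>
definition tpath :: "'a::linorder set \<Rightarrow> 'a set set \<Rightarrow> 'a list \<Rightarrow> bool" where
  "tpath V D \<pi> \<longleftrightarrow> length \<pi> \<ge> 2 \<and> hd \<pi> \<noteq> last \<pi> \<and> set \<pi> \<subseteq> V
    \<and> (\<forall>i < length \<pi> - 1. diagonal V {\<pi> ! i, \<pi> ! (i+1)})
    \<and> (\<forall>i j. i < j \<and> j < length \<pi> - 1 \<longrightarrow> {\<pi> ! i, \<pi> ! (i+1)} \<noteq> {\<pi> ! j, \<pi> ! (j+1)})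
    \<and> (\<forall>i < length \<pi> - 1. \<forall>d\<in>D. \<not> crosses {\<pi> ! i, \<pi> ! (i+1)} d)
    \<and> (\<forall>i. odd i \<and> i < length \<pi> - 1 \<longrightarrow>
          {\<pi> ! i, \<pi> ! (i+1)} \<in> D \<and> crosses {\<pi> ! i, \<pi> ! (i+1)} {hd \<pi>, last \<pi>})
    \<and> (\<forall>i j. odd i \<and> odd j \<and> i < j \<and> j < length \<pi> - 1 \<longrightarrow>
          crosses_before (hd \<pi>) {\<pi> ! i, \<pi> ! (i+1)} {\<pi> ! j, \<pi> ! (j+1)})"

definition T_paths :: "'a::linorder set \<Rightarrow> 'a set set \<Rightarrow> 'a \<Rightarrow> 'a \<Rightarrow> 'a list set" where
  "T_paths V D \<alpha> \<beta> = {\<pi>. tpath V D \<pi> \<and> hd \<pi> = \<alpha> \<and> last \<pi> = \<beta>}"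

end

theory Submission
  imports Defs
begin

text \<open>The first step \<open>{\<pi>\<^sub>1, \<pi>\<^sub>2}\<close> of a T-path may not cross \<open>d = {\<zeta>, \<eta>}\<close>, and \<open>\<pi>\<^sub>1 = \<alpha>\<close>
  lies strictly on one side of \<open>d\<close>; so \<open>\<pi>\<^sub>2\<close> is an endpoint of \<open>d\<close> or lies strictly on
  \<open>\<alpha>\<close>'s side. In the latter case \<open>\<pi>\<^sub>2 \<noteq> \<beta>\<close>, so the path continues with the
  \<open>D\<close>-diagonal \<open>{\<pi>\<^sub>2, \<pi>\<^sub>3} \<noteq> d\<close>; it belongs to \<open>D\<^sub>2\<close>, whose vertices all lie on \<open>\<beta>\<close>'s
  closed side of \<open>d\<close>, a contradiction.\<close>

lemma cyc_lt_cases: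
  fixes a b x :: "'a::linorder"
  assumes "a \<noteq> b"
  obtains "x \<in> {a, b}" | "cyc_lt a x b" | "cyc_lt b x a"
proof -
  have "x \<in> {a, b} \<or> cyc_lt a x b \<or> cyc_lt b x a"
    using assms unfolding cyc_lt_def cyc_le_def by auto
  with that show thesis by blast
qed

lemma cyc_lt_imp_not_cyc_le_swap:
  fixes a b x :: "'a::linorder"
  assumes "cyc_lt a x b"
  shows "\<not> cyc_le b x a"
  using assms unfolding cyc_lt_def cyc_le_def by (auto split: if_splits)

lemma crosses_if_cyc_lt_opposite:
  fixes a b x y :: "'a::linorder"
  assumes "cyc_lt a x b" and "cyc_lt b y a"
  shows "crosses {x, y} {a, b}"
proof -
  have "distinct [x, y, b, a] \<and> cyc_lt x b y \<and> cyc_lt y a x"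
    using assms unfolding cyc_lt_def cyc_le_def by (auto split: if_splits)
  then show ?thesis unfolding crosses_def by (metis insert_commute)
qed

lemma dissection_diagonalD:
  assumes "dissection V D" and "d \<in> D"
  shows "d \<subseteq> V" and "card d = 2"
  using assms unfolding dissection_def internal_def diagonal_def by auto

lemma tpath_first_step_not_crosses:
  assumes "tpath V D \<pi>" and "d \<in> D"
  shows "\<not> crosses {\<pi> ! 0, \<pi> ! 1} d"
  using assms unfolding tpath_def by auto

lemma tpath_second_step_in_dissection:
  assumes "tpath V D \<pi>" and "length \<pi> > 2"
  shows "{\<pi> ! 1, \<pi> ! 2} \<in> D"
proof -
  have "odd (1::nat)" and "1 < length \<pi> - 1" using assms(2) by auto
  with assms(1) show ?thesis unfolding tpath_def by (metis one_add_one)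
qed

lemma tpath_length_gt_two:
  assumes "tpath V D \<pi>" and "\<pi> ! 1 \<noteq> last \<pi>"
  shows "length \<pi> > 2"
proof -
  have "length \<pi> \<ge> 2" using assms(1) unfolding tpath_def by simp
  moreover have "length \<pi> \<noteq> 2"
    using assms(2) by (metis One_nat_def diff_Suc_1 last_conv_nth list.size(3) numeral_2_eq_2
        zero_neq_numeral)
  ultimately show ?thesis by simp
qed

lemma tpath_hd_nth_zero:
  assumes "tpath V D \<pi>"
  shows "\<pi> ! 0 = hd \<pi>"
proof -
  have "\<pi> \<noteq> []" using assms unfolding tpath_def by auto
  then show ?thesis by (simp add: hd_conv_nth)
qed

theorem lemma3p7:
  fixes V :: "'a::linorder set" and D D2 :: "'a set set" and \<zeta> \<eta> \<alpha> \<beta> :: 'a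
    and \<pi> :: "'a list"
  assumes "polygon V"
    and "dissection V D" and "D \<noteq> {}"
    and "{\<zeta>, \<eta>} \<in> D"
    and "D = insert {\<zeta>, \<eta>} D2"
    and "dissection {\<epsilon> \<in> V. cyc_le \<eta> \<epsilon> \<zeta>} D2"
    and "\<alpha> \<in> {\<epsilon> \<in> V. cyc_lt \<zeta> \<epsilon> \<eta>}"
    and "\<beta> \<in> {\<epsilon> \<in> V. cyc_lt \<eta> \<epsilon> \<zeta>}"
    and "\<pi> \<in> T_paths V D \<alpha> \<beta>"
  shows "\<pi> ! 1 \<in> {\<zeta>, \<eta>}"
proof -
  have tp: "tpath V D \<pi>" and hd: "hd \<pi> = \<alpha>" and last: "last \<pi> = \<beta>"
    using assms(9) unfolding T_paths_def by auto
  have \<alpha>: "cyc_lt \<zeta> \<alpha> \<eta>" and \<beta>: "cyc_lt \<eta> \<beta> \<zeta>" using assms(7,8) by auto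
  have "\<zeta> \<noteq> \<eta>" using dissection_diagonalD(2)[OF assms(2,4)] by auto
  then consider "\<pi> ! 1 \<in> {\<zeta>, \<eta>}" | "cyc_lt \<zeta> (\<pi> ! 1) \<eta>" | "cyc_lt \<eta> (\<pi> ! 1) \<zeta>"
    by (rule cyc_lt_cases)
  then show ?thesis
  proof cases
    case 2
    have "\<pi> ! 1 \<noteq> last \<pi>"
      using last 2 cyc_lt_imp_not_cyc_le_swap[OF \<beta>] by (auto simp: cyc_lt_def)
    then have "{\<pi> ! 1, \<pi> ! 2} \<in> D"
      by (intro tpath_second_step_in_dissection[OF tp] tpath_length_gt_two[OF tp])
    moreover have "{\<pi> ! 1, \<pi> ! 2} \<noteq> {\<zeta>, \<eta>}" using 2 by (auto simp: cyc_lt_def)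
    ultimately have "{\<pi> ! 1, \<pi> ! 2} \<in> D2" using assms(5) by simp
    then have "cyc_le \<eta> (\<pi> ! 1) \<zeta>" using dissection_diagonalD(1)[OF assms(6)] by auto
    with 2 show ?thesis using cyc_lt_imp_not_cyc_le_swap by blast
  next
    case 3
    then have "crosses {\<pi> ! 0, \<pi> ! 1} {\<zeta>, \<eta>}"
      using crosses_if_cyc_lt_opposite[OF \<alpha>] tpath_hd_nth_zero[OF tp] hd by simp
    with tpath_first_step_not_crosses[OF tp assms(4)] show ?thesis by contradiction
  qed
qed

end
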